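(* Let $f:2^V\to\mathbb{Z}_{\ge0}$ be a connectivity function, $W\subseteq V$, and $(C_1,C_2,C_3)$ a minimum $W$-improvement of arity 3. Then for every $i\in\{1,2,3\}$, $W$ directly orients $C_i$.
   Context: A connectivity function $f:2^V\to\mathbb{Z}_{\ge0}$ ($V$ finite) satisfies $f(\emptyset)=0$, $f(X)=f(V\setminus X)$, and $f(X\cup Y)+f(X\cap Y)\le f(X)+f(Y)$. Write $\overline{X}=V\setminus X$. $W$ directly orients $C$ if $f(C\cap W)<f(\overline{C}\cap W)$ and $f(C\cap\overline{W})<f(\overline{C}\cap\overline{W})$. For $W\subseteq V$, a $W$-improvement is a tripartition $(C_1,C_2,C_3)$ of $V$ (pairwise disjoint, possibly empty, union $V$) with $f(C_i)<f(W)/2$, $f(C_i\cap W)<f(W)$, $f(C_i\cap\overline{W})<f(W)$ for each $i$. Its width is $\max_i f(C_i)$, its sum-width is $\sum_i f(C_i)$, and its arity is the number of nonempty $C_i$. A $W$-improvement is minimum if it has minimum width among all $W$-improvements, subject to that minimum arity, and subject to those minimum sum-width. *)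

theory Defs
  imports Main
begin

text \<open>Connectivity function on a finite ground set V, with values in the naturals.
  Only the values on subsets of V matter.\<close>

definition connectivity_function :: "'a set \<Rightarrow> ('a set \<Rightarrow> nat) \<Rightarrow> bool" where
  "connectivity_function V f \<longleftrightarrow>
     finite V \<and> f {} = 0 \<and>
     (\<forall>X. X \<subseteq> V \<longrightarrow> f X = f (V - X)) \<and>
     (\<forall>X Y. X \<subseteq> V \<longrightarrow> Y \<subseteq> V \<longrightarrow> f (X \<union> Y) + f (X \<inter> Y) \<le> f X + f Y)"

definition directly_orients :: "'a set \<Rightarrow> ('a set \<Rightarrow> nat) \<Rightarrow> 'a set \<Rightarrow> 'a set \<Rightarrow> bool" where
  "directly_orients V f W C \<longleftrightarrow>
     f (C \<inter> W) < f ((V - C) \<inter> W) \<and> f (C \<inter> (V - W)) < f ((V - C) \<inter> (V - W))"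

definition tripartition :: "'a set \<Rightarrow> 'a set \<times> 'a set \<times> 'a set \<Rightarrow> bool" where
  "tripartition V P \<longleftrightarrow> (case P of (C1, C2, C3) \<Rightarrow>
     C1 \<inter> C2 = {} \<and> C1 \<inter> C3 = {} \<and> C2 \<inter> C3 = {} \<and> C1 \<union> C2 \<union> C3 = V)"

definition parts :: "'a set \<times> 'a set \<times> 'a set \<Rightarrow> 'a set list" where
  "parts P = (case P of (C1, C2, C3) \<Rightarrow> [C1, C2, C3])"

text \<open>f(C) < f(W)/2 is written as 2 * f(C) < f(W) (equivalent over the integers).\<close>
definition improvement :: "'a set \<Rightarrow> ('a set \<Rightarrow> nat) \<Rightarrow> 'a set \<Rightarrow> 'a set \<times> 'a set \<times> 'a set \<Rightarrow> bool" where
  "improvement V f W P \<longleftrightarrow> tripartition V P \<and>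
     (\<forall>C \<in> set (parts P). 2 * f C < f W \<and> f (C \<inter> W) < f W \<and> f (C \<inter> (V - W)) < f W)"

definition width :: "('a set \<Rightarrow> nat) \<Rightarrow> 'a set \<times> 'a set \<times> 'a set \<Rightarrow> nat" where
  "width f P = (case P of (C1, C2, C3) \<Rightarrow> max (f C1) (max (f C2) (f C3)))"

definition sum_width :: "('a set \<Rightarrow> nat) \<Rightarrow> 'a set \<times> 'a set \<times> 'a set \<Rightarrow> nat" where
  "sum_width f P = (case P of (C1, C2, C3) \<Rightarrow> f C1 + f C2 + f C3)"

definition arity :: "'a set \<times> 'a set \<times> 'a set \<Rightarrow> nat" where
  "arity P = length (filter (\<lambda>C. C \<noteq> {}) (parts P))"

definition min_improvement :: "'a set \<Rightarrow> ('a set \<Rightarrow> nat) \<Rightarrow> 'a set \<Rightarrow> 'a set \<times> 'a set \<times> 'a set \<Rightarrow> bool" where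
  "min_improvement V f W P \<longleftrightarrow> improvement V f W P \<and>
     (\<forall>Q. improvement V f W Q \<longrightarrow>
        width f P < width f Q \<or>
        (width f P = width f Q \<and> arity P < arity Q) \<or>
        (width f P = width f Q \<and> arity P = arity Q \<and> sum_width f P \<le> sum_width f Q))"

end

theory Submission
  imports Defs
begin

text \<open>If a part A of a minimum W-improvement of arity 3 were not directly oriented by W, then
  merging the other two parts would give the W-improvement (A, V - A, {}) of no larger width
  and smaller arity. So one side of V - A, say (V - A) \<inter> W, has connectivity at least f(W).
  Then W trivially orients A on that side, and submodularity of A against V - W shows
  f(A \<inter> (V - W)) \<le> f(A) < f(W)/2, whence f((V - A) \<inter> (V - W)) > f(W)/2 by subadditivity.\<close>

lemma connectivity_function_empty:
  "connectivity_function V f \<Longrightarrow> f {} = 0"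
  unfolding connectivity_function_def by blast

lemma connectivity_function_complement:
  "connectivity_function V f \<Longrightarrow> X \<subseteq> V \<Longrightarrow> f (V - X) = f X"
  unfolding connectivity_function_def by (rule sym) blast

lemma connectivity_function_submodular:
  "connectivity_function V f \<Longrightarrow> X \<subseteq> V \<Longrightarrow> Y \<subseteq> V \<Longrightarrow> f (X \<union> Y) + f (X \<inter> Y) \<le> f X + f Y"
  unfolding connectivity_function_def by blast

lemma connectivity_function_subadditive:
  assumes "connectivity_function V f" "X \<subseteq> V" "Y \<subseteq> V"
  shows "f (X \<union> Y) \<le> f X + f Y"
  using connectivity_function_submodular[OF assms] by linarith

lemma connectivity_function_inter_le:
  assumes "connectivity_function V f" "X \<subseteq> V" "Y \<subseteq> V" "f Y \<le> f (X \<union> Y)"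
  shows "f (X \<inter> Y) \<le> f X"
  using connectivity_function_submodular[OF assms(1-3)] assms(4) by linarith

lemma directly_orients_complement:
  assumes "W \<subseteq> V"
  shows "directly_orients V f (V - W) C \<longleftrightarrow> directly_orients V f W C"
proof -
  have "V - (V - W) = W" using assms by blast
  then show ?thesis unfolding directly_orients_def by (simp add: conj_commute)
qed

lemma directly_orients_if_complement_inter_ge:
  assumes cf: "connectivity_function V f" and "W \<subseteq> V" "A \<subseteq> V"
    and small: "2 * f A < f W" "f (A \<inter> W) < f W"
    and large: "f W \<le> f ((V - A) \<inter> W)"
  shows "directly_orients V f W A"
proof -
  have fWc: "f (V - W) = f W"
    using connectivity_function_complement[OF cf \<open>W \<subseteq> V\<close>] .
  have "f (V - (A \<union> (V - W))) = f (A \<union> (V - W))"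
    by (rule connectivity_function_complement[OF cf]) (use \<open>A \<subseteq> V\<close> in blast)
  moreover have "V - (A \<union> (V - W)) = (V - A) \<inter> W"
    using \<open>W \<subseteq> V\<close> by blast
  ultimately have "f (A \<inter> (V - W)) \<le> f A"
    using connectivity_function_inter_le[OF cf \<open>A \<subseteq> V\<close> Diff_subset] large fWc by simp
  moreover have "f (V - W) \<le> f (A \<inter> (V - W)) + f ((V - A) \<inter> (V - W))"
  proof -
    have "f ((A \<inter> (V - W)) \<union> ((V - A) \<inter> (V - W)))
        \<le> f (A \<inter> (V - W)) + f ((V - A) \<inter> (V - W))"
      by (rule connectivity_function_subadditive[OF cf]) blast+
    moreover have "(A \<inter> (V - W)) \<union> ((V - A) \<inter> (V - W)) = V - W"
      using \<open>A \<subseteq> V\<close> by blast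
    ultimately show ?thesis by simp
  qed
  ultimately show ?thesis
    unfolding directly_orients_def using small large fWc by linarith
qed

lemma directly_orients_if_complement_not_small:
  assumes cf: "connectivity_function V f" and "W \<subseteq> V" "A \<subseteq> V"
    and small: "2 * f A < f W" "f (A \<inter> W) < f W" "f (A \<inter> (V - W)) < f W"
    and not_small: "\<not> (f ((V - A) \<inter> W) < f W \<and> f ((V - A) \<inter> (V - W)) < f W)"
  shows "directly_orients V f W A"
proof (cases "f W \<le> f ((V - A) \<inter> W)")
  case True
  then show ?thesis
    using directly_orients_if_complement_inter_ge[OF assms(1-3) small(1,2)] by blast
next
  case False
  have fWc: "f (V - W) = f W"
    using connectivity_function_complement[OF cf \<open>W \<subseteq> V\<close>] .
  have "directly_orients V f (V - W) A"
    using directly_orients_if_complement_inter_ge[OF cf Diff_subset \<open>A \<subseteq> V\<close>]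
      small(1,3) not_small False fWc by simp
  then show ?thesis using directly_orients_complement[OF \<open>W \<subseteq> V\<close>] by blast
qed

lemma width_bipartition:
  "connectivity_function V f \<Longrightarrow> A \<subseteq> V \<Longrightarrow> width f (A, V - A, {}) = f A"
  unfolding width_def
  by (simp add: connectivity_function_complement connectivity_function_empty)

lemma arity_bipartition_le: "arity (A, B, {}) \<le> 2"
  unfolding arity_def parts_def by simp

lemma min_improvement_arity_3_not_bipartition:
  assumes cf: "connectivity_function V f"
    and min: "min_improvement V f W P" and "arity P = 3"
    and A: "A \<in> set (parts P)" and "A \<subseteq> V"
  shows "\<not> improvement V f W (A, V - A, {})"
proof
  assume "improvement V f W (A, V - A, {})"
  then have "width f P < width f (A, V - A, {}) \<or> arity P < arity (A, V - A, {})
      \<or> arity P = arity (A, V - A, {})"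
    using min unfolding min_improvement_def by blast
  then have "width f P < f A"
    using width_bipartition[OF cf \<open>A \<subseteq> V\<close>] arity_bipartition_le[of A "V - A"] \<open>arity P = 3\<close>
    by linarith
  moreover have "f A \<le> width f P"
    using A unfolding width_def parts_def by (auto split: prod.splits)
  ultimately show False by linarith
qed

lemma min_improvement_arity_3_directly_orients:
  assumes cf: "connectivity_function V f" and "W \<subseteq> V"
    and min: "min_improvement V f W P" and "arity P = 3"
    and A: "A \<in> set (parts P)"
  shows "directly_orients V f W A"
proof -
  have imp: "improvement V f W P" using min unfolding min_improvement_def by blast
  then have "A \<subseteq> V"
    using A unfolding improvement_def tripartition_def parts_def by (auto split: prod.splits)
  have small: "2 * f A < f W" "f (A \<inter> W) < f W" "f (A \<inter> (V - W)) < f W"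
    using imp A unfolding improvement_def by auto
  have "tripartition V (A, V - A, {})"
    using \<open>A \<subseteq> V\<close> unfolding tripartition_def by auto
  moreover have "\<not> improvement V f W (A, V - A, {})"
    using min_improvement_arity_3_not_bipartition[OF cf min \<open>arity P = 3\<close> A \<open>A \<subseteq> V\<close>] .
  ultimately have "\<not> (f ((V - A) \<inter> W) < f W \<and> f ((V - A) \<inter> (V - W)) < f W)"
    using small connectivity_function_complement[OF cf \<open>A \<subseteq> V\<close>] connectivity_function_empty[OF cf]
    unfolding improvement_def parts_def by fastforce
  then show ?thesis
    using directly_orients_if_complement_not_small[OF cf \<open>W \<subseteq> V\<close> \<open>A \<subseteq> V\<close> small] by blast
qed

theorem lemma7:
  fixes V W :: "'a set" and f :: "'a set \<Rightarrow> nat" and C1 C2 C3 :: "'a set"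
  assumes "connectivity_function V f"
    and "W \<subseteq> V"
    and "min_improvement V f W (C1, C2, C3)"
    and "arity (C1, C2, C3) = 3"
  shows "directly_orients V f W C1 \<and> directly_orients V f W C2 \<and> directly_orients V f W C3"
  using min_improvement_arity_3_directly_orients[OF assms] unfolding parts_def by simp

end
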